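(* Consider $n$ robots with positions $p_1,\dots,p_n\in\mathbb R^m$ (stacked state $\mathbf x$), communication range $R>0$, leader set $\mathcal L=\{1,\dots,l\}$ and follower set $\mathcal F=\{l+1,\dots,n\}$ with $f=n-l\ge1$. Let $r\in\mathbb Z_+$, $\delta\in\mathbb Z_+$ with $\delta\le f$, and parameters $s,s_A>0$, $q,q_A\in(0,1)$. Let $\bar\pi^r_{\mathcal F}(\delta)$ be computed by the smoothed percolation recursion below. If $\bar\pi^r_{\mathcal F}(\delta)\ge\mathbf 0_f$ componentwise, then the communication graph $\mathcal G(\mathbf x)$ is strongly $r$-robust with respect to $\mathcal L$.
   Context: $\Delta_{ij}(\mathbf x)=\|p_i-p_j\|$. The communication graph $\mathcal G(\mathbf x)=(\mathcal V,\mathcal E)$ has $\mathcal V=[n]$ and undirected edges $\{i,j\}$, $i\ne j$, with $\Delta_{ij}(\mathbf x)<R$; $\mathcal N_i$ is the neighbor set of $i$. A nonempty $\mathcal S\subseteq\mathcal V$ is $r$-reachable if some $i\in\mathcal S$ has $|\mathcal N_i\setminus\mathcal S|\ge r$; $\mathcal G$ is strongly $r$-robust with respect to $\mathcal L$ if every nonempty $\mathcal S_2\subseteq\mathcal V\setminus\mathcal L$ is $r$-reachable. Sigmoid: $\sigma_{s,q}(y)=\frac{1+q}{1+q^{-1}e^{-sy}}-q$, and $\sigma^f_{s,q}$ is its elementwise application on $\mathbb R^f$. Smoothed adjacency $\bar A(\mathbf x)\in\mathbb R^{n\times n}$: for $i\ne j$, $\bar a_{ij}(\mathbf x)=\sigma_{s_A,q_A}\big((R^2-\Delta_{ij}(\mathbf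 x)^2)^3\big)$ if $\Delta_{ij}(\mathbf x)<R$ and $\bar a_{ij}(\mathbf x)=0$ otherwise; $\bar a_{ii}=0$. Smoothed percolation: $\bar\pi^r_{\mathcal F}(0)=\mathbf 0_f$ and, for $k=1,\dots,\delta$, $\bar\pi^r_{\mathcal F}(k)=\sigma^f_{s,q}\Big(\begin{bmatrix}\mathbf 0_{f\times l}&\mathbf I_f\end{bmatrix}\bar A(\mathbf x)\begin{bmatrix}\mathbf 1_l\\ \bar\pi^r_{\mathcal F}(k-1)\end{bmatrix}-r\mathbf 1_f\Big)\in\mathbb R^f$, whose entries are denoted $\bar\pi^r_{l+1}(k),\dots,\bar\pi^r_n(k)$. *)

theory Defs
  imports "HOL-Analysis.Analysis"
begin

text \<open>Robots are indexed by 1..n; positions p i :: real^'m (the dimension m is the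
  type 'm). Leaders are 1..l, followers l+1..n.\<close>

definition Delta :: "(nat \<Rightarrow> real ^ 'm) \<Rightarrow> nat \<Rightarrow> nat \<Rightarrow> real" where
  "Delta p i j = norm (p i - p j)"

definition nbrs :: "nat \<Rightarrow> real \<Rightarrow> (nat \<Rightarrow> real ^ 'm) \<Rightarrow> nat \<Rightarrow> nat set" where
  "nbrs n R p i = {j \<in> {1..n}. j \<noteq> i \<and> Delta p i j < R}"

definition r_reachable :: "nat \<Rightarrow> real \<Rightarrow> (nat \<Rightarrow> real ^ 'm) \<Rightarrow> nat \<Rightarrow> nat set \<Rightarrow> bool" where
  "r_reachable n R p r S \<longleftrightarrow> S \<noteq> {} \<and> (\<exists>i\<in>S. card (nbrs n R p i - S) \<ge> r)"

definition strongly_robust :: "nat \<Rightarrow> real \<Rightarrow> (nat \<Rightarrow> real ^ 'm) \<Rightarrow> nat \<Rightarrow> nat set \<Rightarrow> bool" where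
  "strongly_robust n R p r L \<longleftrightarrow>
     (\<forall>S2. S2 \<subseteq> {1..n} - L \<and> S2 \<noteq> {} \<longrightarrow> r_reachable n R p r S2)"

definition sigmoid :: "real \<Rightarrow> real \<Rightarrow> real \<Rightarrow> real" where
  "sigmoid s q y = (1 + q) / (1 + inverse q * exp (- s * y)) - q"

definition abar :: "real \<Rightarrow> real \<Rightarrow> real \<Rightarrow> (nat \<Rightarrow> real ^ 'm) \<Rightarrow> nat \<Rightarrow> nat \<Rightarrow> real" where
  "abar sA qA R p i j =
     (if i \<noteq> j \<and> Delta p i j < R then sigmoid sA qA ((R^2 - (Delta p i j)^2)^3) else 0)"

text \<open>Smoothed percolation: pibar ... k i is the entry of pi^r_F(k) for follower i
  (i in l+1..n); leaders contribute the constant 1.\<close>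
fun pibar :: "nat \<Rightarrow> nat \<Rightarrow> real \<Rightarrow> real \<Rightarrow> real \<Rightarrow> real \<Rightarrow> real \<Rightarrow> (nat \<Rightarrow> real ^ 'm)
    \<Rightarrow> nat \<Rightarrow> nat \<Rightarrow> nat \<Rightarrow> real" where
  "pibar n l s q sA qA R p r 0 i = 0"
| "pibar n l s q sA qA R p r (Suc k) i =
     sigmoid s q ((\<Sum>j\<in>{1..l}. abar sA qA R p i j)
                  + (\<Sum>j\<in>{l+1..n}. abar sA qA R p i j * pibar n l s q sA qA R p r k j)
                  - real r)"

end

theory Submission
  imports Defs
begin

text \<open>Let \<open>S\<close> be a nonempty set of followers in which every robot
  has fewer than \<open>r\<close> neighbours outside \<open>S\<close>. The smoothed weights lie in \<open>[0, 1)\<close> and vanish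
  off the edges, and every percolation value is below \<open>1\<close>; hence, as long as the values on
  \<open>S\<close> are \<open>\<le> 0\<close>, the input to the sigmoid at \<open>i \<in> S\<close> is at most the number of neighbours
  of \<open>i\<close> outside \<open>S\<close>, which is less than \<open>r\<close>. Since the sigmoid preserves the sign of its
  argument, the values on \<open>S\<close> become strictly negative after one step and stay so, which
  contradicts \<open>pibar \<dots> \<delta> \<ge> 0\<close> on \<open>S\<close>.\<close>

lemma sigmoid_less_one: "q > 0 \<Longrightarrow> sigmoid s q y < 1"
proof -
  assume q: "q > 0"
  have "1 + inverse q * exp (- s * y) > 1" using q by simp
  then have "(1 + q) / (1 + inverse q * exp (- s * y)) < 1 + q"
    using q by (simp add: divide_less_eq)
  then show ?thesis unfolding sigmoid_def by simp
qed

lemma sigmoid_neg_iff: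
  assumes "s > 0" "q > 0"
  shows "sigmoid s q y < 0 \<longleftrightarrow> y < 0"
proof -
  have denom_pos: "1 + inverse q * exp (- s * y) > 0" using assms by (simp add: add_pos_nonneg)
  have "sigmoid s q y < 0 \<longleftrightarrow> 1 + q < q * (1 + inverse q * exp (- s * y))"
    unfolding sigmoid_def using denom_pos by (simp add: divide_less_eq mult.commute)
  also have "q * (1 + inverse q * exp (- s * y)) = q + exp (- s * y)"
    using assms by (simp add: distrib_left mult.assoc[symmetric])
  also have "1 + q < q + exp (- s * y) \<longleftrightarrow> 0 < - s * y" by simp
  also have "\<dots> \<longleftrightarrow> y < 0" using assms by (simp add: mult_less_0_iff)
  finally show ?thesis .
qed

lemma abar_nonneg:
  assumes "sA > 0" "qA > 0"
  shows "abar sA qA R p i j \<ge> 0"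
proof (cases "i \<noteq> j \<and> Delta p i j < R")
  case True
  have "Delta p i j \<ge> 0" unfolding Delta_def by simp
  then have "(Delta p i j)^2 < R^2" using True by (simp add: power_strict_mono)
  then have "\<not> sigmoid sA qA ((R^2 - (Delta p i j)^2)^3) < 0"
    using sigmoid_neg_iff[OF assms] by simp
  then show ?thesis using True unfolding abar_def by simp
qed (auto simp: abar_def)

lemma abar_le_indicator_nbrs:
  assumes "qA > 0" "j \<in> {1..n}"
  shows "abar sA qA R p i j \<le> of_bool (j \<in> nbrs n R p i)"
  using assms sigmoid_less_one[of qA] unfolding abar_def nbrs_def by (auto simp: less_imp_le)

lemma pibar_less_one: "q > 0 \<Longrightarrow> pibar n l s q sA qA R p r k i < 1"
  by (cases k) (auto simp: sigmoid_less_one)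

text \<open>Robots in \<open>S\<close> contribute non-positive terms, every other robot contributes at most its
  weight, and the weight vanishes unless the robot is a neighbour of \<open>i\<close>.\<close>

lemma percolation_input_le_card_outside:
  assumes "sA > 0" "q > 0" "qA > 0" "l \<le> n" "S \<subseteq> {l+1..n}"
    and nonpos: "\<forall>j\<in>S. pibar n l s q sA qA R p r k j \<le> 0"
  shows "(\<Sum>j\<in>{1..l}. abar sA qA R p i j)
           + (\<Sum>j\<in>{l+1..n}. abar sA qA R p i j * pibar n l s q sA qA R p r k j)
         \<le> card (nbrs n R p i - S)"
proof -
  let ?a = "abar sA qA R p i" and ?pi = "pibar n l s q sA qA R p r k"
  let ?out = "\<lambda>j. of_bool (j \<in> nbrs n R p i - S) :: real"
  have leader_term: "?a j \<le> ?out j" if "j \<in> {1..l}" for j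
    using that assms(4,5) abar_le_indicator_nbrs[OF assms(3), of j n sA R p i] by auto
  have follower_term: "?a j * ?pi j \<le> ?out j" if "j \<in> {l+1..n}" for j
  proof (cases "j \<in> S")
    case True
    then show ?thesis
      using nonpos abar_nonneg[OF assms(1,3), of R p i j] by (simp add: mult_nonneg_nonpos)
  next
    case False
    have "?a j * ?pi j \<le> ?a j"
      using mult_left_mono[OF less_imp_le[OF pibar_less_one[OF assms(2)]] abar_nonneg[OF assms(1,3)]]
      by simp
    also have "\<dots> \<le> ?out j"
      using False that abar_le_indicator_nbrs[OF assms(3), of j n sA R p i] by auto
    finally show ?thesis .
  qed
  have "(\<Sum>j\<in>{1..l}. ?a j) + (\<Sum>j\<in>{l+1..n}. ?a j * ?pi j)
        \<le> (\<Sum>j\<in>{1..l}. ?out j) + (\<Sum>j\<in>{l+1..n}. ?out j)"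
    using leader_term follower_term by (intro add_mono sum_mono) auto
  also have "\<dots> = (\<Sum>j\<in>{1..n}. ?out j)"
  proof -
    have split: "{1..n} = {1..l} \<union> {l+1..n}" using assms(4) by auto
    show ?thesis unfolding split by (rule sum.union_disjoint[symmetric]) auto
  qed
  also have "\<dots> = card (nbrs n R p i - S)"
  proof -
    have "{1..n} \<inter> {j \<in> nbrs n R p i. j \<notin> S} = nbrs n R p i - S"
      unfolding nbrs_def by auto
    then show ?thesis by (simp add: sum.If_cases)
  qed
  finally show ?thesis .
qed

lemma pibar_neg_on_unreachable_set:
  assumes "s > 0" "sA > 0" "q > 0" "qA > 0" "l \<le> n" "S \<subseteq> {l+1..n}"
    and unreachable: "\<forall>i\<in>S. card (nbrs n R p i - S) < r"
  shows "\<forall>i\<in>S. pibar n l s q sA qA R p r k i \<le> 0 \<and> (k > 0 \<longrightarrow> pibar n l s q sA qA R p r k i < 0)"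
proof (induction k)
  case 0
  then show ?case by simp
next
  case (Suc k)
  have "pibar n l s q sA qA R p r (Suc k) i < 0" if "i \<in> S" for i
  proof -
    have "(\<Sum>j\<in>{1..l}. abar sA qA R p i j)
            + (\<Sum>j\<in>{l+1..n}. abar sA qA R p i j * pibar n l s q sA qA R p r k j)
          \<le> card (nbrs n R p i - S)"
      using percolation_input_le_card_outside[OF assms(2-6)] Suc.IH by blast
    also have "\<dots> < real r" using unreachable that by simp
    finally show ?thesis using sigmoid_neg_iff[OF assms(1,3)] by simp
  qed
  then show ?case by (auto intro: less_imp_le)
qed

theorem proposition1:
  fixes p :: "nat \<Rightarrow> real ^ 'm"
    and n l r \<delta> :: nat and R s q sA qA :: real
  assumes "R > 0"
    and "l < n"
    and "r \<ge> 1"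
    and "\<delta> \<ge> 1" and "\<delta> \<le> n - l"
    and "s > 0" and "sA > 0"
    and "0 < q" and "q < 1" and "0 < qA" and "qA < 1"
    and "\<forall>i\<in>{l+1..n}. pibar n l s q sA qA R p r \<delta> i \<ge> 0"
  shows "strongly_robust n R p r {1..l}"
proof (rule ccontr)
  assume "\<not> strongly_robust n R p r {1..l}"
  then obtain S where "S \<subseteq> {1..n} - {1..l}" "S \<noteq> {}"
    and unreachable: "\<forall>i\<in>S. card (nbrs n R p i - S) < r"
    unfolding strongly_robust_def r_reachable_def by (auto simp: not_le)
  then have S: "S \<subseteq> {l+1..n}" "S \<noteq> {}" by auto
  obtain i where "i \<in> S" using S(2) by blast
  then have "pibar n l s q sA qA R p r \<delta> i < 0"
    using pibar_neg_on_unreachable_set[OF assms(6,7,8,10) _ S(1) unreachable] assms(2,4) by simp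
  then show False using assms(12) S(1) \<open>i \<in> S\<close> by force
qed

end
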